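(* Let $\mathcal{C}$ be a subsystem of a TRS $\mathcal{R}$. If $\ell\leftrightarrow^*_\mathcal{C}r$ for every rule $\ell\to r\in\mathcal{R}\setminus\mathcal{C}$, then $t\leftrightarrow^*_\mathcal{C}u$ for every parallel critical pair $(t,u)$ between $\mathcal{R}$ and $\mathcal{R}$.
   Context: A TRS is a set of rules $\ell\to r$ ($\ell\notin\mathcal{V}$, $\mathcal{V}ar(r)\subseteq\mathcal{V}ar(\ell)$); $\leftrightarrow^*_\mathcal{C}$ is the reflexive-transitive-symmetric closure of $\to_\mathcal{C}$. Parallel critical pair between $\mathcal{R}$ and $\mathcal{R}$: for variants (renamings) $\ell\to r$ and $\ell_p\to r_p$ ($p\in P$) of $\mathcal{R}$-rules, pairwise variable-disjoint, where $P$ is a non-empty set of pairwise parallel function-symbol positions of $\ell$, $\sigma$ a most general unifier of $\{\ell_p\approx\ell|_p\}_{p\in P}$, and $\ell_\epsilon\to r_\epsilon$ not a variant of $\ell\to r$ if $P=\{\epsilon\}$: the pair $((\ell\sigma)[r_p\sigma]_{p\in P}, r\sigma)$. *)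

theory Defs
  imports Main
begin

datatype ('f, 'v) "term" = Var 'v | Fun 'f "('f, 'v) term list"

fun vars_term :: "('f, 'v) term \<Rightarrow> 'v set" where
  "vars_term (Var x) = {x}"
| "vars_term (Fun f ts) = (\<Union>t \<in> set ts. vars_term t)"

fun subst_apply :: "('v \<Rightarrow> ('f, 'w) term) \<Rightarrow> ('f, 'v) term \<Rightarrow> ('f, 'w) term" where
  "subst_apply \<sigma> (Var x) = \<sigma> x"
| "subst_apply \<sigma> (Fun f ts) = Fun f (map (subst_apply \<sigma>) ts)"

definition is_Fun :: "('f, 'v) term \<Rightarrow> bool" where
  "is_Fun t \<longleftrightarrow> (\<exists>f ts. t = Fun f ts)"

type_synonym pos = "nat list"

fun is_pos :: "('f, 'v) term \<Rightarrow> pos \<Rightarrow> bool" where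
  "is_pos t [] = True"
| "is_pos (Fun f ts) (i # p) = (i < length ts \<and> is_pos (ts ! i) p)"
| "is_pos (Var x) (i # p) = False"

definition poss :: "('f, 'v) term \<Rightarrow> pos set" where
  "poss t = {p. is_pos t p}"

fun subt_at :: "('f, 'v) term \<Rightarrow> pos \<Rightarrow> ('f, 'v) term" where
  "subt_at t [] = t"
| "subt_at (Fun f ts) (i # p) = subt_at (ts ! i) p"
| "subt_at (Var x) (i # p) = Var x"

fun replace_at :: "('f, 'v) term \<Rightarrow> pos \<Rightarrow> ('f, 'v) term \<Rightarrow> ('f, 'v) term" where
  "replace_at t [] s = s"
| "replace_at (Fun f ts) (i # p) s = Fun f (ts[i := replace_at (ts ! i) p s])"
| "replace_at (Var x) (i # p) s = Var x"

definition fun_poss :: "('f, 'v) term \<Rightarrow> pos set" where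
  "fun_poss t = {p \<in> poss t. is_Fun (subt_at t p)}"

definition parallel_pos :: "pos \<Rightarrow> pos \<Rightarrow> bool" where
  "parallel_pos p q \<longleftrightarrow> \<not> (\<exists>r. q = p @ r) \<and> \<not> (\<exists>r. p = q @ r)"

function par_replace :: "('f, 'v) term \<Rightarrow> pos set \<Rightarrow> (pos \<Rightarrow> ('f, 'v) term) \<Rightarrow> ('f, 'v) term" where
  "par_replace t P s = (if [] \<in> P then s [] else
     (case t of Var x \<Rightarrow> Var x
      | Fun f ts \<Rightarrow> Fun f (map (\<lambda>i. par_replace (ts ! i) {q. i # q \<in> P} (\<lambda>q. s (i # q)))
                             [0..<length ts])))"
  by pat_completeness auto
termination
  by (relation "measure (\<lambda>(t, P, s). size t)")
     (auto simp: less_Suc_eq_le intro: size_list_estimation' nth_mem)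

type_synonym ('f, 'v) rule = "('f, 'v) term \<times> ('f, 'v) term"

definition is_TRS :: "('f, 'v) rule set \<Rightarrow> bool" where
  "is_TRS R \<longleftrightarrow> (\<forall>(l, r) \<in> R. is_Fun l \<and> vars_term r \<subseteq> vars_term l)"

definition rstep :: "('f, 'v) rule set \<Rightarrow> ('f, 'v) term rel" where
  "rstep R = {(s, t). \<exists>p l r \<sigma>. (l, r) \<in> R \<and> p \<in> poss s \<and>
      subt_at s p = subst_apply \<sigma> l \<and> t = replace_at s p (subst_apply \<sigma> r)}"

definition conv :: "('f, 'v) rule set \<Rightarrow> ('f, 'v) term rel" where
  "conv R = (rstep R \<union> (rstep R)\<inverse>)\<^sup>*"

definition vars_rule :: "('f, 'v) rule \<Rightarrow> 'v set" where
  "vars_rule lr = vars_term (fst lr) \<union> vars_term (snd lr)"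

definition is_variant :: "('f, 'v) rule \<Rightarrow> ('f, 'v) rule \<Rightarrow> bool" where
  "is_variant lr lr' \<longleftrightarrow> (\<exists>\<pi>. bij \<pi> \<and>
      fst lr' = subst_apply (Var \<circ> \<pi>) (fst lr) \<and> snd lr' = subst_apply (Var \<circ> \<pi>) (snd lr))"

definition variant_of :: "('f, 'v) rule set \<Rightarrow> ('f, 'v) rule \<Rightarrow> bool" where
  "variant_of R lr' \<longleftrightarrow> (\<exists>lr \<in> R. is_variant lr lr')"

definition mgu_of :: "('v \<Rightarrow> ('f, 'v) term) \<Rightarrow> (('f, 'v) term \<times> ('f, 'v) term) set \<Rightarrow> bool" where
  "mgu_of \<sigma> E \<longleftrightarrow> (\<forall>(s, t) \<in> E. subst_apply \<sigma> s = subst_apply \<sigma> t) \<and>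
     (\<forall>\<tau> :: 'v \<Rightarrow> ('f, 'v) term. (\<forall>(s, t) \<in> E. subst_apply \<tau> s = subst_apply \<tau> t) \<longrightarrow>
        (\<exists>\<delta>. \<forall>x. \<tau> x = subst_apply \<delta> (\<sigma> x)))"

definition par_crit_pair :: "('f, 'v) rule set \<Rightarrow> ('f, 'v) term \<Rightarrow> ('f, 'v) term \<Rightarrow> bool" where
  "par_crit_pair R t u \<longleftrightarrow> (\<exists>l r P lp rp \<theta>.
     variant_of R (l, r) \<and>
     (\<forall>p \<in> P. variant_of R (lp p, rp p)) \<and>
     (\<forall>p \<in> P. vars_rule (l, r) \<inter> vars_rule (lp p, rp p) = {}) \<and>
     (\<forall>p \<in> P. \<forall>q \<in> P. p \<noteq> q \<longrightarrow> vars_rule (lp p, rp p) \<inter> vars_rule (lp q, rp q) = {}) \<and>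
     P \<noteq> {} \<and> P \<subseteq> fun_poss l \<and>
     (\<forall>p \<in> P. \<forall>q \<in> P. p \<noteq> q \<longrightarrow> parallel_pos p q) \<and>
     mgu_of \<theta> ((\<lambda>p. (lp p, subt_at l p)) ` P) \<and>
     (P = {[]} \<longrightarrow> \<not> is_variant (l, r) (lp [], rp [])) \<and>
     t = par_replace (subst_apply \<theta> l) P (\<lambda>p. subst_apply \<theta> (rp p)) \<and>
     u = subst_apply \<theta> r)"

end

theory Submission
  imports Defs
begin

text \<open>Every rule of \<open>R\<close> is \<open>C\<close>-convertible (rules of \<open>C\<close> by one root step, the others by
  hypothesis), and conversion is closed under substitutions and contexts. Hence every instance of a
  variant of an \<open>R\<close>-rule is \<open>C\<close>-convertible. Since \<open>\<theta>\<close> unifies, \<open>\<theta>\<ell>\<close> is \<open>\<theta>\<ell>\<close> with the subterms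
  \<open>\<theta>\<ell>\<^sub>p\<close> put back at the positions \<open>p \<in> P\<close>; converting each of them to \<open>\<theta>r\<^sub>p\<close> in parallel gives
  \<open>t \<leftrightarrow>\<^sup>*\<^sub>C \<theta>\<ell> \<leftrightarrow>\<^sup>*\<^sub>C \<theta>r = u\<close>.\<close>

declare par_replace.simps[simp del]

lemma par_replace_root: "[] \<in> P \<Longrightarrow> par_replace t P s = s []"
  by (subst par_replace.simps) simp

lemma par_replace_Var: "[] \<notin> P \<Longrightarrow> par_replace (Var x) P s = Var x"
  by (subst par_replace.simps) simp

lemma par_replace_Fun: "[] \<notin> P \<Longrightarrow> par_replace (Fun f ts) P s =
  Fun f (map (\<lambda>i. par_replace (ts ! i) {q. i # q \<in> P} (\<lambda>q. s (i # q))) [0..<length ts])"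
  by (subst par_replace.simps) simp

lemma subst_apply_subst_apply:
  "subst_apply \<tau> (subst_apply \<sigma> t) = subst_apply (\<lambda>x. subst_apply \<tau> (\<sigma> x)) t"
  by (induction t) auto

lemma is_pos_subst: "is_pos s p \<Longrightarrow> is_pos (subst_apply \<tau> s) p"
  by (induction s p rule: is_pos.induct) auto

lemma subt_at_subst: "is_pos s p \<Longrightarrow> subt_at (subst_apply \<tau> s) p = subst_apply \<tau> (subt_at s p)"
  by (induction s p rule: is_pos.induct) auto

lemma replace_at_subst:
  "is_pos s p \<Longrightarrow>
    replace_at (subst_apply \<tau> s) p (subst_apply \<tau> u) = subst_apply \<tau> (replace_at s p u)"
  by (induction s p rule: is_pos.induct) (auto simp: map_update)

lemma par_replace_subt_at:
  "\<forall>p\<in>P. is_pos t p \<and> s p = subt_at t p \<Longrightarrow> par_replace t P s = t"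
proof (induction t P s rule: par_replace.induct)
  case (1 t P s)
  show ?case
  proof (cases "[] \<in> P")
    case True
    then show ?thesis using "1.prems" by (simp add: par_replace_root)
  next
    case root: False
    show ?thesis
    proof (cases t)
      case (Var x)
      then show ?thesis using root by (simp add: par_replace_Var)
    next
      case (Fun f ts)
      have "par_replace (ts ! i) {q. i # q \<in> P} (\<lambda>q. s (i # q)) = ts ! i" if "i < length ts" for i
        using "1.IH"[OF root Fun, of i] "1.prems" Fun that by fastforce
      then show ?thesis using root Fun by (auto simp: par_replace_Fun intro: nth_equalityI)
    qed
  qed
qed

lemma rstepI:
  "(l, r) \<in> R \<Longrightarrow> is_pos s p \<Longrightarrow> subt_at s p = subst_apply \<sigma> l \<Longrightarrow>
    t = replace_at s p (subst_apply \<sigma> r) \<Longrightarrow> (s, t) \<in> rstep R"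
  unfolding rstep_def poss_def by blast

lemma rstepE:
  assumes "(s, t) \<in> rstep R"
  obtains p l r \<sigma> where "(l, r) \<in> R" and "is_pos s p" and "subt_at s p = subst_apply \<sigma> l"
    and "t = replace_at s p (subst_apply \<sigma> r)"
  using assms unfolding rstep_def poss_def by blast

lemma conv_refl: "(s, s) \<in> conv R"
  unfolding conv_def by simp

lemma conv_trans: "(s, t) \<in> conv R \<Longrightarrow> (t, u) \<in> conv R \<Longrightarrow> (s, u) \<in> conv R"
  unfolding conv_def by (rule rtrancl_trans)

lemma conv_sym: "(s, t) \<in> conv R \<Longrightarrow> (t, s) \<in> conv R"
  unfolding conv_def by (metis sym_Un_converse sym_rtrancl symD)

lemma rstep_imp_conv: "(s, t) \<in> rstep R \<Longrightarrow> (s, t) \<in> conv R"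
  unfolding conv_def by blast

lemma conv_closure:
  assumes "\<And>s t. (s, t) \<in> rstep R \<Longrightarrow> (g s, g t) \<in> rstep R"
    and "(s, t) \<in> conv R"
  shows "(g s, g t) \<in> conv R"
  using assms(2) unfolding conv_def
proof (induction rule: rtrancl_induct)
  case (step y z)
  then have "(g y, g z) \<in> rstep R \<union> (rstep R)\<inverse>"
    using assms(1) by blast
  with step.IH show ?case by (rule rtrancl_into_rtrancl)
qed simp

lemma rstep_subst:
  assumes "(s, t) \<in> rstep R"
  shows "(subst_apply \<tau> s, subst_apply \<tau> t) \<in> rstep R"
proof -
  from assms obtain p l r \<sigma> where lr: "(l, r) \<in> R" and p: "is_pos s p"
    and sp: "subt_at s p = subst_apply \<sigma> l" and t: "t = replace_at s p (subst_apply \<sigma> r)"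
    by (rule rstepE)
  let ?\<sigma>' = "\<lambda>x. subst_apply \<tau> (\<sigma> x)"
  have "is_pos (subst_apply \<tau> s) p"
    and "subt_at (subst_apply \<tau> s) p = subst_apply ?\<sigma>' l"
    using p sp by (simp_all add: is_pos_subst subt_at_subst subst_apply_subst_apply)
  moreover have "subst_apply \<tau> t = replace_at (subst_apply \<tau> s) p (subst_apply ?\<sigma>' r)"
    using p t by (simp add: replace_at_subst flip: subst_apply_subst_apply)
  ultimately show ?thesis
    using lr by (blast intro: rstepI)
qed

lemma conv_subst:
  "(s, t) \<in> conv R \<Longrightarrow> (subst_apply \<tau> s, subst_apply \<tau> t) \<in> conv R"
  by (rule conv_closure[OF rstep_subst])

lemma rstep_arg:
  assumes "(s, t) \<in> rstep R" and "i < length ts"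
  shows "(Fun f (ts[i := s]), Fun f (ts[i := t])) \<in> rstep R"
proof -
  from assms(1) obtain p l r \<sigma> where lr: "(l, r) \<in> R" and p: "is_pos s p"
    and sp: "subt_at s p = subst_apply \<sigma> l" and t: "t = replace_at s p (subst_apply \<sigma> r)"
    by (rule rstepE)
  have "is_pos (Fun f (ts[i := s])) (i # p)"
    and "subt_at (Fun f (ts[i := s])) (i # p) = subst_apply \<sigma> l"
    and "Fun f (ts[i := t]) = replace_at (Fun f (ts[i := s])) (i # p) (subst_apply \<sigma> r)"
    using assms(2) p sp t by simp_all
  with lr show ?thesis
    by (blast intro: rstepI)
qed

lemma conv_arg:
  "(s, t) \<in> conv R \<Longrightarrow> i < length ts \<Longrightarrow> (Fun f (ts[i := s]), Fun f (ts[i := t])) \<in> conv R"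
  by (rule conv_closure[OF rstep_arg])

lemma conv_args:
  "list_all2 (\<lambda>s t. (s, t) \<in> conv R) ss ts \<Longrightarrow> (Fun f (pre @ ss), Fun f (pre @ ts)) \<in> conv R"
proof (induction ss arbitrary: ts pre)
  case Nil
  then show ?case by (simp add: conv_refl)
next
  case (Cons s ss)
  then obtain t ts' where ts: "ts = t # ts'" and st: "(s, t) \<in> conv R"
    and rest: "list_all2 (\<lambda>s t. (s, t) \<in> conv R) ss ts'"
    by (cases ts) auto
  have "(Fun f (pre @ s # ss), Fun f ((pre @ [t]) @ ss)) \<in> conv R"
    using conv_arg[OF st, of "length pre" "pre @ s # ss" f] by simp
  moreover have "(Fun f ((pre @ [t]) @ ss), Fun f ((pre @ [t]) @ ts')) \<in> conv R"
    by (rule Cons.IH[OF rest])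
  ultimately show ?case
    unfolding ts by (simp add: conv_trans)
qed

lemma conv_par_replace:
  "\<forall>p\<in>P. (s p, s' p) \<in> conv R \<Longrightarrow> (par_replace t P s, par_replace t P s') \<in> conv R"
proof (induction t P s arbitrary: s' rule: par_replace.induct)
  case (1 t P s)
  show ?case
  proof (cases "[] \<in> P")
    case True
    then show ?thesis using "1.prems" by (simp add: par_replace_root)
  next
    case root: False
    show ?thesis
    proof (cases t)
      case (Var x)
      then show ?thesis using root by (simp add: par_replace_Var conv_refl)
    next
      case (Fun f ts)
      have "list_all2 (\<lambda>s t. (s, t) \<in> conv R)
        (map (\<lambda>i. par_replace (ts ! i) {q. i # q \<in> P} (\<lambda>q. s (i # q))) [0..<length ts])
        (map (\<lambda>i. par_replace (ts ! i) {q. i # q \<in> P} (\<lambda>q. s' (i # q))) [0..<length ts])"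
        unfolding list_all2_conv_all_nth using "1.IH"[OF root Fun] "1.prems" by auto
      from conv_args[OF this, of f "[]"] show ?thesis
        using root Fun by (simp add: par_replace_Fun)
    qed
  qed
qed

lemma rstep_rule_instance: "(l, r) \<in> R \<Longrightarrow> (subst_apply \<sigma> l, subst_apply \<sigma> r) \<in> rstep R"
  by (rule rstepI[where p = "[]"]) simp_all

lemma conv_rule_instance:
  assumes "\<forall>(l, r) \<in> R - C. (l, r) \<in> conv C" and "(l, r) \<in> R"
  shows "(subst_apply \<sigma> l, subst_apply \<sigma> r) \<in> conv C"
proof (cases "(l, r) \<in> C")
  case True
  then show ?thesis by (intro rstep_imp_conv rstep_rule_instance)
next
  case False
  with assms show ?thesis by (auto intro: conv_subst)
qed

lemma conv_variant_instance:
  assumes "\<forall>(l, r) \<in> R - C. (l, r) \<in> conv C" and "variant_of R (l, r)"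
  shows "(subst_apply \<sigma> l, subst_apply \<sigma> r) \<in> conv C"
proof -
  from assms(2) obtain l0 r0 \<pi> where "(l0, r0) \<in> R"
    and "l = subst_apply (Var \<circ> \<pi>) l0" and "r = subst_apply (Var \<circ> \<pi>) r0"
    unfolding variant_of_def is_variant_def by auto
  with conv_rule_instance[OF assms(1), of l0 r0 "\<lambda>x. \<sigma> (\<pi> x)"] show ?thesis
    by (simp add: subst_apply_subst_apply)
qed

theorem mainTheorem14:
  fixes R C :: "('f, 'v) rule set"
  assumes "is_TRS R"
    and "C \<subseteq> R"
    and "\<forall>(l, r) \<in> R - C. (l, r) \<in> conv C"
    and "par_crit_pair R t u"
  shows "(t, u) \<in> conv C"
proof -
  note conv_inst = conv_variant_instance[OF assms(3)]
  from assms(4) obtain l r P lp rp \<theta> where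
    lr: "variant_of R (l, r)" and lrp: "\<forall>p \<in> P. variant_of R (lp p, rp p)" and
    P: "P \<subseteq> fun_poss l" and mgu: "mgu_of \<theta> ((\<lambda>p. (lp p, subt_at l p)) ` P)" and
    t: "t = par_replace (subst_apply \<theta> l) P (\<lambda>p. subst_apply \<theta> (rp p))" and
    u: "u = subst_apply \<theta> r"
    unfolding par_crit_pair_def by blast
  have "\<forall>p\<in>P. is_pos l p \<and> subst_apply \<theta> (lp p) = subst_apply \<theta> (subt_at l p)"
    using P mgu unfolding fun_poss_def poss_def mgu_of_def by auto
  then have "par_replace (subst_apply \<theta> l) P (\<lambda>p. subst_apply \<theta> (lp p)) = subst_apply \<theta> l"
    by (intro par_replace_subt_at) (simp add: is_pos_subst subt_at_subst)
  moreover have "(t, par_replace (subst_apply \<theta> l) P (\<lambda>p. subst_apply \<theta> (lp p))) \<in> conv C"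
    unfolding t using lrp by (intro conv_par_replace) (blast intro: conv_sym conv_inst)
  ultimately have "(t, subst_apply \<theta> l) \<in> conv C"
    by simp
  then show ?thesis
    unfolding u using conv_inst[OF lr] by (rule conv_trans)
qed

end
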